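(* Let $\phi:[0,1]\to\mathbb{C}$ be continuous with $\phi(0)=\phi(1)=1$ and $\hat\phi\in\ell^1(\mathbb{Z})$ (regarded as a function on $\mathbb{R}/\mathbb{Z}$). Let $m,\mathfrak{m}\in\mathbb{N}$, $N\ge\mathfrak{m}$, and define for $k\in\mathbb{Z}$ $$\mu(k)=\sum_{l\in k-B_N}\hat\phi(l),\qquad \nu(k)=\sum_{l\notin k-B_N}\hat\phi(l).$$ For $\mathfrak{m}$-Fourier bandlimited $f\in L^2([0,1];\mathbb{C}^m)$ define $$\mathcal{R}_\phi f(x)=\sum_{j=0}^{2N-1}f(j/2N)\,s_N(x-j/2N)\,\phi(x-j/2N),\qquad x\in[0,1],$$ with arguments taken modulo $1$. Then $$\hat f(k)-\widehat{\mathcal{R}_\phi f}(k)=\begin{cases}\hat f(k)\nu(k), & k\in B_{\mathfrak{m}},\\ -\hat f(k-2lN)\mu(k), & \text{if there is } l\ne0 \text{ with } k-2lN\in B_{\mathfrak{m}},\\ 0,&\text{otherwise}.\end{cases}$$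
   Context: $B_N=\{-N,\dots,N-1\}$ and $k-B_N=\{k-b:b\in B_N\}$. $\hat g(k)=\int_0^1 g(x)e^{-i2\pi kx}dx$. $f$ is $\mathfrak{m}$-Fourier bandlimited if $\hat f(k)=0$ for $k\notin B_{\mathfrak{m}}$ (identified with its continuous $1$-periodic representative). $s_N(x)=\frac1{2N}\sum_{k=-N}^{N-1}e^{i2\pi kx}$. *)

theory Defs
  imports "HOL-Analysis.Analysis"
begin

definition Bset :: "nat \<Rightarrow> int set" where
  "Bset N = {- int N ..< int N}"

definition fcoeff :: "(real \<Rightarrow> complex) \<Rightarrow> int \<Rightarrow> complex" where
  "fcoeff g k = integral {0..1} (\<lambda>x. g x * exp (- (\<i> * complex_of_real (2 * pi * real_of_int k * x))))"

definition fcoeff_vec :: "(real \<Rightarrow> complex ^ 'm) \<Rightarrow> int \<Rightarrow> complex ^ 'm" where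
  "fcoeff_vec g k = (\<chi> i. fcoeff (\<lambda>x. g x $ i) k)"

text \<open>Bandlimited: the continuous 1-periodic representative, Fourier coefficients vanish outside B_mm\<close>
definition bandlimited :: "nat \<Rightarrow> (real \<Rightarrow> complex ^ 'm) \<Rightarrow> bool" where
  "bandlimited mm f \<longleftrightarrow> continuous_on UNIV f \<and> (\<forall>x. f (x + 1) = f x)
      \<and> (\<forall>k. k \<notin> Bset mm \<longrightarrow> fcoeff_vec f k = 0)"

definition sN :: "nat \<Rightarrow> real \<Rightarrow> complex" where
  "sN N x = (1 / (2 * of_nat N)) * (\<Sum>k\<in>Bset N. exp (\<i> * complex_of_real (2 * pi * real_of_int k * x)))"

definition mu :: "(real \<Rightarrow> complex) \<Rightarrow> nat \<Rightarrow> int \<Rightarrow> complex" where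
  "mu phi N k = (\<Sum>l\<in>(\<lambda>b. k - b) ` Bset N. fcoeff phi l)"

definition nu :: "(real \<Rightarrow> complex) \<Rightarrow> nat \<Rightarrow> int \<Rightarrow> complex" where
  "nu phi N k = (\<Sum>\<^sub>\<infinity>l\<in>UNIV - (\<lambda>b. k - b) ` Bset N. fcoeff phi l)"

definition Rphi :: "(real \<Rightarrow> complex) \<Rightarrow> nat \<Rightarrow> (real \<Rightarrow> complex ^ 'm) \<Rightarrow> real \<Rightarrow> complex ^ 'm" where
  "Rphi phi N f x = (\<Sum>j<2*N. (sN N (frac (x - real j / (2 * real N))) * phi (frac (x - real j / (2 * real N))))
                                  *s f (real j / (2 * real N)))"

end

theory Submission
  imports Defs
begin

(* The components of f and the function phi equal their Fourier series: a finite sum for f, an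
   absolutely convergent one for phi. Both follow from uniqueness: a continuous g on [0,1] with
   g 0 = g 1 and vanishing Fourier coefficients is orthogonal to every trigonometric polynomial,
   and these are uniformly dense (Stone-Weierstrass on the unit circle), so the integral of
   |g|^2 vanishes.
   Hence the kernel y |-> s_N(y) phi(y) has Fourier coefficients mu(k)/2N, and R_phi f, a
   combination of its translates by the sample points j/2N, has k-th coefficient mu(k)/2N times
   the discrete Fourier transform of the samples. By aliasing, that transform is 2N times the sum
   of the hat f(p) over the p in B_mm congruent to k modulo 2N, and there is at most one such p
   because N >= mm. Finally mu(k) + nu(k) is the sum of all hat phi(l), which is phi(0) = 1. *)

section \<open>Characters and Fourier coefficients\<close>

definition cis2pi :: "int \<Rightarrow> real \<Rightarrow> complex" where
  "cis2pi k x = exp (\<i> * complex_of_real (2 * pi * real_of_int k * x))"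

lemma fcoeff_altdef: "fcoeff g k = integral {0..1} (\<lambda>x. g x * cis2pi (-k) x)"
  unfolding fcoeff_def cis2pi_def by (simp add: algebra_simps)

lemma cis2pi_add_freq: "cis2pi (k + l) x = cis2pi k x * cis2pi l x"
  unfolding cis2pi_def by (simp add: algebra_simps flip: exp_add)

lemma cis2pi_add: "cis2pi k (x + y) = cis2pi k x * cis2pi k y"
  unfolding cis2pi_def by (simp add: algebra_simps flip: exp_add)

lemma cis2pi_diff: "cis2pi k (x - y) = cis2pi k x * cis2pi (-k) y"
  unfolding cis2pi_def by (simp add: algebra_simps flip: exp_add)

lemma cis2pi_0 [simp]: "cis2pi 0 x = 1"
  unfolding cis2pi_def by simp

lemma cis2pi_of_int [simp]: "cis2pi k (of_int n) = 1"
proof -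
  have "\<i> * complex_of_real (2 * pi * real_of_int k * real_of_int n) = 2 * pi * \<i> * of_int (k * n)"
    by (simp add: algebra_simps)
  then show ?thesis
    unfolding cis2pi_def exp_eq_1 by (simp add: algebra_simps) (metis of_int_mult)
qed

lemma cis2pi_0_1 [simp]: "cis2pi k 0 = 1" "cis2pi k 1 = 1"
  using cis2pi_of_int[of k 0] cis2pi_of_int[of k 1] by simp_all

lemma cis2pi_frac: "cis2pi k (frac x) = cis2pi k x"
  using cis2pi_add[of k "frac x" "of_int \<lfloor>x\<rfloor>"] by (simp add: frac_def)

lemma norm_cis2pi [simp]: "norm (cis2pi k x) = 1"
  unfolding cis2pi_def by (simp add: norm_exp_i_times)

lemma cnj_cis2pi: "cnj (cis2pi k x) = cis2pi (-k) x"
  unfolding cis2pi_def by (simp add: exp_cnj algebra_simps)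

lemma continuous_on_cis2pi [continuous_intros]: "continuous_on S (cis2pi k)"
  unfolding cis2pi_def by (intro continuous_intros)

lemma has_vector_derivative_cis2pi:
  "(cis2pi k has_vector_derivative (2 * pi * \<i> * of_int k * cis2pi k x)) (at x within S)"
proof -
  let ?c = "2 * pi * \<i> * of_int k"
  have eq: "cis2pi k y = exp (?c * of_real y)" for y
    unfolding cis2pi_def by (simp add: algebra_simps)
  have "((\<lambda>z. exp (?c * z)) has_field_derivative ?c * exp (?c * of_real x)) (at (of_real x))"
    by (auto intro!: derivative_eq_intros)
  from has_vector_derivative_real_field[OF this, of S] show ?thesis
    by (simp add: eq [abs_def] eq)
qed

lemma has_integral_cis2pi: "(cis2pi k has_integral (if k = 0 then 1 else 0)) {0..1}"
proof (cases "k = 0")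
  case True
  then have "cis2pi k = (\<lambda>x. 1)" by (simp add: fun_eq_iff)
  then show ?thesis using has_integral_const_real[of 1 0 1] True by simp
next
  case False
  let ?c = "2 * pi * \<i> * of_int k"
  have "((\<lambda>x. cis2pi k x / ?c) has_vector_derivative cis2pi k x) (at x within {0..1})" for x
    using has_vector_derivative_divide[OF has_vector_derivative_cis2pi[of k x "{0..1}"], of ?c] False
    by simp
  from fundamental_theorem_of_calculus[OF _ this]
  have "(cis2pi k has_integral cis2pi k 1 / ?c - cis2pi k 0 / ?c) {0..1}" by simp
  then show ?thesis using False by simp
qed

lemma fcoeff_cis2pi: "fcoeff (cis2pi p) k = (if p = k then 1 else 0)"
  using has_integral_cis2pi[of "p - k"]
  by (simp add: fcoeff_altdef integral_unique flip: cis2pi_add_freq)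

lemma fcoeff_cmult: "fcoeff (\<lambda>x. a * g x) k = a * fcoeff g k"
  unfolding fcoeff_altdef by (simp add: mult.assoc)

lemma fcoeff_sum:
  assumes "finite J" and "\<And>j. j \<in> J \<Longrightarrow> continuous_on {0..1} (g j)"
  shows "fcoeff (\<lambda>x. \<Sum>j\<in>J. g j x) k = (\<Sum>j\<in>J. fcoeff (g j) k)"
  unfolding fcoeff_altdef sum_distrib_right
  by (intro integral_sum assms integrable_continuous_interval continuous_intros)

lemma fcoeff_diff:
  assumes "continuous_on {0..1} g" and "continuous_on {0..1} h"
  shows "fcoeff (\<lambda>x. g x - h x) k = fcoeff g k - fcoeff h k"
  unfolding fcoeff_altdef left_diff_distrib
  by (intro integral_diff assms integrable_continuous_interval continuous_intros)

lemma fcoeff_trig_sum: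
  assumes "finite B"
  shows "fcoeff (\<lambda>x. \<Sum>p\<in>B. a p * cis2pi p x) k = (if k \<in> B then a k else 0)"
  using assms
  by (simp add: fcoeff_sum continuous_intros fcoeff_cmult fcoeff_cis2pi if_distrib[of "(*) _"]
        sum.delta' cong: if_cong)

lemma fcoeff_vec_nth [simp]: "fcoeff_vec g k $ i = fcoeff (\<lambda>x. g x $ i) k"
  unfolding fcoeff_vec_def by simp

section \<open>Absolutely convergent Fourier series\<close>

definition fourier_series :: "(int \<Rightarrow> complex) \<Rightarrow> real \<Rightarrow> complex" where
  "fourier_series c x = (\<Sum>\<^sub>\<infinity>l. c l * cis2pi l x)"

lemma continuous_on_fourier_series:
  assumes "(\<lambda>l. norm (c l)) summable_on UNIV"
  shows "continuous_on S (fourier_series c)"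
proof -
  have "uniform_limit S (\<lambda>X x. \<Sum>l\<in>X. c l * cis2pi l x) (fourier_series c)
          (finite_subsets_at_top UNIV)"
    unfolding fourier_series_def [abs_def]
    by (rule Weierstrass_m_test_general[OF _ assms]) (simp add: norm_mult)
  then show ?thesis
    by (rule uniform_limit_theorem[rotated]) (auto intro!: always_eventually continuous_intros)
qed

lemma fourier_series_frac: "fourier_series c (frac y) = fourier_series c y"
  unfolding fourier_series_def cis2pi_frac ..

lemma fourier_series_translate:
  "fourier_series c (x - a) = fourier_series (\<lambda>l. c l * cis2pi (-l) a) x"
  unfolding fourier_series_def by (simp add: cis2pi_diff algebra_simps)

lemma cis2pi_mult_fourier_series:
  "cis2pi b x * fourier_series c x = fourier_series (\<lambda>l. c (l - b)) x"
proof -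
  have "cis2pi b x * fourier_series c x = (\<Sum>\<^sub>\<infinity>l. c l * cis2pi (l + b) x)"
    unfolding fourier_series_def
    by (simp add: cis2pi_add_freq algebra_simps flip: infsum_cmult_right')
  also have "\<dots> = (\<Sum>\<^sub>\<infinity>l. c (l - b) * cis2pi l x)"
    by (rule infsum_reindex_bij_witness[of UNIV "\<lambda>l. l - b" "\<lambda>l. l + b"]) auto
  finally show ?thesis unfolding fourier_series_def .
qed

lemma fcoeff_fourier_series:
  assumes c: "(\<lambda>l. norm (c l)) summable_on UNIV"
  shows "fcoeff (fourier_series c) k = c k"
proof -
  have "uniform_limit {0..1} (\<lambda>X x. \<Sum>l\<in>X. c l * cis2pi (l - k) x)
          (\<lambda>x. \<Sum>\<^sub>\<infinity>l. c l * cis2pi (l - k) x) (finite_subsets_at_top UNIV)"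
    by (rule Weierstrass_m_test_general[OF _ c]) (simp add: norm_mult)
  then obtain I J
    where I: "\<And>X. ((\<lambda>x. \<Sum>l\<in>X. c l * cis2pi (l - k) x) has_integral I X) {0..1}"
      and J: "((\<lambda>x. \<Sum>\<^sub>\<infinity>l. c l * cis2pi (l - k) x) has_integral J) {0..1}"
      and IJ: "(I \<longlongrightarrow> J) (finite_subsets_at_top UNIV)"
    by (rule uniform_limit_integral) (auto intro!: continuous_intros)
  have "I X = c k" if "finite X" "k \<in> X" for X
  proof -
    have "((\<lambda>x. \<Sum>l\<in>X. c l * cis2pi (l - k) x) has_integral
            (\<Sum>l\<in>X. c l * (if l - k = 0 then 1 else 0))) {0..1}"
      by (intro has_integral_sum \<open>finite X\<close> has_integral_mult_right has_integral_cis2pi)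
    with I[of X] that show ?thesis
      by (simp add: has_integral_unique if_distrib[of "(*) _"] sum.delta cong: if_cong)
  qed
  then have "\<forall>\<^sub>F X in finite_subsets_at_top UNIV. I X = c k"
    unfolding eventually_finite_subsets_at_top by (intro exI[of _ "{k}"]) auto
  then have "J = c k"
    using tendsto_unique[OF finite_subsets_at_top_neq_bot IJ] tendsto_eventually by blast
  moreover have "(\<Sum>\<^sub>\<infinity>l. c l * cis2pi (l - k) x) = fourier_series c x * cis2pi (-k) x" for x
    unfolding fourier_series_def
    by (simp add: mult.assoc flip: infsum_cmult_left' cis2pi_add_freq)
  ultimately show ?thesis
    using J by (simp add: fcoeff_altdef integral_unique)
qed

lemma fcoeff_fourier_series_translate:
  assumes c: "(\<lambda>l. norm (c l)) summable_on UNIV"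
  shows "fcoeff (\<lambda>x. fourier_series c (x - a)) k = c k * cis2pi (-k) a"
proof -
  have "(\<lambda>l. norm (c l * cis2pi (-l) a)) summable_on UNIV"
    using c by (simp add: norm_mult)
  then show ?thesis
    by (simp add: fourier_series_translate fcoeff_fourier_series)
qed

section \<open>Uniqueness of Fourier coefficients\<close>

inductive trig_poly :: "(real \<Rightarrow> complex) \<Rightarrow> bool" where
  trig_poly_monomial: "trig_poly (\<lambda>t. c * cis2pi k t)"
| trig_poly_add: "trig_poly F \<Longrightarrow> trig_poly G \<Longrightarrow> trig_poly (\<lambda>t. F t + G t)"

lemma trig_poly_const: "trig_poly (\<lambda>t. c)"
  using trig_poly_monomial[of c 0] by simp

lemma trig_poly_mult:
  assumes "trig_poly F" and "trig_poly G"
  shows "trig_poly (\<lambda>t. F t * G t)"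
  using assms
proof (induction F rule: trig_poly.induct)
  case (trig_poly_monomial c k)
  then show ?case
  proof (induction G rule: trig_poly.induct)
    case (trig_poly_monomial d l)
    then show ?case
      using trig_poly.trig_poly_monomial[of "c * d" "k + l"]
      by (simp add: cis2pi_add_freq algebra_simps)
  next
    case (trig_poly_add G1 G2)
    then show ?case
      using trig_poly.trig_poly_add by (simp add: distrib_left)
  qed
next
  case (trig_poly_add F1 F2)
  then show ?case
    using trig_poly.trig_poly_add by (simp add: distrib_right)
qed

lemma bounded_linear_complex_decomp:
  assumes "bounded_linear q"
  shows "q z = Re z * q 1 + Im z * q \<i>"
proof -
  interpret q: bounded_linear q by fact
  have "Re z *\<^sub>R 1 + Im z *\<^sub>R \<i> = z"
    by (simp add: complex_eq_iff)
  then show ?thesis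
    by (metis q.add q.scaleR real_scaleR_def)
qed

lemma trig_poly_real_polynomial_function:
  assumes "real_polynomial_function q"
  shows "trig_poly (\<lambda>t. complex_of_real (q (cis2pi 1 t)))"
  using assms
proof (induction q rule: real_polynomial_function.induct)
  case (linear q)
  define a where "a = (q 1 - \<i> * q \<i>) / 2"
  define b where "b = (q 1 + \<i> * q \<i>) / 2"
  have "complex_of_real (q z) = a * z + b * cnj z" for z
  proof -
    have "a * z + b * cnj z = q 1 * ((z + cnj z) / 2) - \<i> * q \<i> * ((z - cnj z) / 2)"
      by (simp add: a_def b_def field_simps)
    also have "\<dots> = q 1 * Re z - \<i> * q \<i> * (\<i> * Im z)"
      by (simp add: complex_add_cnj complex_diff_cnj)
    also have "\<dots> = q 1 * Re z + q \<i> * Im z"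
      by (simp add: mult.commute mult.left_commute)
    finally show ?thesis
      by (simp add: bounded_linear_complex_decomp[OF linear, of z] mult.commute)
  qed
  then have "(\<lambda>t. complex_of_real (q (cis2pi 1 t))) = (\<lambda>t. a * cis2pi 1 t + b * cis2pi (-1) t)"
    by (simp add: cnj_cis2pi)
  then show ?case
    by (simp only: trig_poly_add trig_poly_monomial)
qed (auto intro: trig_poly_const trig_poly_add trig_poly_mult)

lemma trig_poly_polynomial_function:
  fixes p :: "complex \<Rightarrow> complex"
  assumes "polynomial_function p"
  shows "trig_poly (\<lambda>t. p (cis2pi 1 t))"
proof -
  have "real_polynomial_function (Re \<circ> p)" and "real_polynomial_function (Im \<circ> p)"
    using assms unfolding polynomial_function_def
    by (auto intro: bounded_linear_Re bounded_linear_Im)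
  then have "trig_poly (\<lambda>t. complex_of_real ((Re \<circ> p) (cis2pi 1 t))
                + complex_of_real ((Im \<circ> p) (cis2pi 1 t)) * \<i>)"
    by (intro trig_poly_add trig_poly_mult trig_poly_real_polynomial_function trig_poly_const)
  moreover have "complex_of_real (Re w) + complex_of_real (Im w) * \<i> = w" for w
    by (simp add: complex_eq_iff)
  ultimately show ?thesis
    by simp
qed

lemma Arg2pi_cis2pi:
  assumes "0 \<le> t" and "t < 1"
  shows "Arg2pi (cis2pi 1 t) = 2 * pi * t"
  unfolding cis2pi_def using assms by (subst Arg2pi_exp) auto

lemma trig_poly_dense:
  fixes g :: "real \<Rightarrow> complex"
  assumes g: "continuous_on {0..1} g" and g01: "g 0 = g 1" and e: "e > 0"
  obtains P where "trig_poly P" and "\<And>t. t \<in> {0..1} \<Longrightarrow> norm (g t - P t) < e"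
proof -
  define h where "h = g \<circ> (\<lambda>z. Arg2pi z / (2 * pi))"
  \<comment> \<open>Continuity of the closed loop g read off the circle is a fact about loop homotopies.\<close>
  have "homotopic_loops UNIV g g"
    using g g01 unfolding homotopic_loops_refl path_def pathstart_def pathfinish_def by simp
  then have "homotopic_with_canon (\<lambda>h. True) (sphere 0 1) UNIV h h"
    unfolding h_def by (rule homotopic_loops_imp_homotopic_circlemaps)
  then have "continuous_on (sphere 0 1) h"
    by (rule homotopic_with_imp_continuous[THEN conjunct1])
  from Stone_Weierstrass_polynomial_function[OF compact_sphere this e]
  obtain p where p: "polynomial_function p"
    and hp: "\<And>z. z \<in> sphere 0 1 \<Longrightarrow> norm (h z - p z) < e"
    by blast
  have h_cis2pi: "h (cis2pi 1 t) = g t" if "t \<in> {0..1}" for t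
  proof (cases "t < 1")
    case True
    with that show ?thesis by (simp add: h_def Arg2pi_cis2pi)
  next
    case False
    with that have "t = 1" by simp
    moreover have "Arg2pi 1 = 0"
      using Arg2pi_of_real[of 1] by simp
    ultimately show ?thesis
      using g01 by (simp add: h_def)
  qed
  show ?thesis
  proof (rule that)
    show "trig_poly (\<lambda>t. p (cis2pi 1 t))"
      by (rule trig_poly_polynomial_function[OF p])
    fix t :: real
    assume "t \<in> {0..1}"
    with hp[of "cis2pi 1 t"] h_cis2pi show "norm (g t - p (cis2pi 1 t)) < e"
      by simp
  qed
qed

lemma trig_poly_orthogonal:
  assumes g: "continuous_on {0..1} g" and z: "\<And>k. fcoeff g k = 0" and "trig_poly P"
  shows "((\<lambda>t. g t * P t) has_integral 0) {0..1}"
  using \<open>trig_poly P\<close>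
proof (induction P rule: trig_poly.induct)
  case (trig_poly_monomial c k)
  have "(\<lambda>t. g t * cis2pi k t) integrable_on {0..1}"
    by (intro integrable_continuous_interval continuous_intros g)
  moreover have "integral {0..1} (\<lambda>t. g t * cis2pi k t) = 0"
    using z[of "-k"] by (simp add: fcoeff_altdef)
  ultimately have "((\<lambda>t. g t * cis2pi k t) has_integral 0) {0..1}"
    by (metis has_integral_integral)
  from has_integral_mult_right[OF this, of c] show ?case
    by (simp add: algebra_simps)
next
  case (trig_poly_add F G)
  from has_integral_add[OF trig_poly_add.IH] show ?case
    by (simp add: distrib_left)
qed

lemma integral_mult_cnj_eq_0_imp_0:
  fixes g :: "real \<Rightarrow> complex"
  assumes g: "continuous_on {0..1} g" and int0: "integral {0..1} (\<lambda>t. g t * cnj (g t)) = 0"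
    and t: "t \<in> {0..1}"
  shows "g t = 0"
proof -
  define R where "R t = (norm (g t))\<^sup>2" for t
  have R: "continuous_on {0..1} R"
    unfolding R_def by (intro continuous_intros g)
  then have "((\<lambda>t. complex_of_real (R t)) has_integral of_real (integral {0..1} R)) {0..1}"
    by (intro has_integral_of_real integrable_integral integrable_continuous_interval)
  moreover have "complex_of_real (R t) = g t * cnj (g t)" for t
    unfolding R_def by (rule complex_norm_square)
  ultimately have "integral {0..1} R = 0"
    using int0 by (simp add: integral_unique)
  moreover have "(R has_integral integral {0..1} R) {0..1}"
    using R by (intro integrable_integral integrable_continuous_interval)
  ultimately have "(R has_integral 0) (cbox 0 1)"
    by simp
  with R t have "R t = 0"
    by (intro has_integral_0_cbox_imp_0[of 0 1 R]) (auto simp: R_def)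
  then show ?thesis by (simp add: R_def)
qed

theorem fourier_uniqueness:
  fixes g :: "real \<Rightarrow> complex"
  assumes g: "continuous_on {0..1} g" and g01: "g 0 = g 1" and z: "\<And>k. fcoeff g k = 0"
    and t: "t \<in> {0..1}"
  shows "g t = 0"
proof -
  obtain M where M: "M > 0" "\<And>t. t \<in> {0..1} \<Longrightarrow> norm (g t) \<le> M"
    using compact_imp_bounded[OF compact_continuous_image[OF g compact_Icc]]
    unfolding bounded_pos by auto
  define Q where "Q = integral {0..1} (\<lambda>t. g t * cnj (g t))"
  have "norm Q \<le> e" if "e > 0" for e
  proof -
    have "continuous_on {0..1} (\<lambda>t. cnj (g t))"
      by (intro continuous_intros g)
    moreover have "cnj (g 0) = cnj (g 1)" and "e / M > 0"
      using g01 \<open>e > 0\<close> M(1) by simp_all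
    ultimately obtain P where P: "trig_poly P"
      and approx: "\<And>t. t \<in> {0..1} \<Longrightarrow> norm (cnj (g t) - P t) < e / M"
      by (rule trig_poly_dense) blast
    have "((\<lambda>t. g t * cnj (g t)) has_integral Q) {0..1}"
      unfolding Q_def by (intro integrable_integral integrable_continuous_interval continuous_intros g)
    from has_integral_diff[OF this trig_poly_orthogonal[OF g z P]]
    have H: "((\<lambda>t. g t * (cnj (g t) - P t)) has_integral Q) (cbox 0 1)"
      by (simp add: right_diff_distrib)
    have B: "norm (g t * (cnj (g t) - P t)) \<le> M * (e / M)" if "t \<in> cbox 0 1" for t
      using that M approx[of t] unfolding norm_mult
      by (intro mult_mono) (auto simp: less_imp_le)
    have "norm Q \<le> M * (e / M) * measure lborel (cbox 0 (1::real))"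
      by (rule has_integral_bound[OF _ H B]) (use M \<open>e > 0\<close> in simp)
    then show ?thesis
      using M by simp
  qed
  then have "Q = 0"
    by (metis norm_le_zero_iff field_le_epsilon add_0)
  then show ?thesis
    unfolding Q_def by (rule integral_mult_cnj_eq_0_imp_0[OF g _ t])
qed

section \<open>Sampling and reconstruction\<close>

lemma bandlimited_fourier_expansion:
  assumes bl: "bandlimited mm f" and x: "x \<in> {0..1}"
  shows "f x $ i = (\<Sum>p\<in>Bset mm. fcoeff (\<lambda>x. f x $ i) p * cis2pi p x)"
proof -
  have fc: "continuous_on UNIV f" and f1: "f 1 = f 0"
    and f0: "\<And>k. k \<notin> Bset mm \<Longrightarrow> fcoeff_vec f k = 0"
    using bl unfolding bandlimited_def by (metis add_0)+
  define g where "g x = f x $ i - (\<Sum>p\<in>Bset mm. fcoeff (\<lambda>x. f x $ i) p * cis2pi p x)" for x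
  have c1: "continuous_on {0..1} (\<lambda>x. f x $ i)"
    by (intro continuous_intros continuous_on_subset[OF fc]) auto
  have c2: "continuous_on {0..1} (\<lambda>x. \<Sum>p\<in>Bset mm. fcoeff (\<lambda>x. f x $ i) p * cis2pi p x)"
    by (intro continuous_intros)
  have "g x = 0"
  proof (rule fourier_uniqueness[OF _ _ _ x])
    show "continuous_on {0..1} g"
      unfolding g_def by (intro continuous_on_diff c1 c2)
    show "g 0 = g 1"
      by (simp add: g_def f1)
    show "fcoeff g k = 0" for k
      using f0[of k] unfolding g_def fcoeff_diff[OF c1 c2]
      by (simp add: fcoeff_trig_sum Bset_def vec_eq_iff)
  qed
  then show ?thesis
    by (simp add: g_def)
qed

lemma frac_eq_fourier_series:
  assumes phi: "continuous_on {0..1} phi" and phi01: "phi 0 = phi 1"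
    and c: "(\<lambda>k. norm (fcoeff phi k)) summable_on UNIV"
  shows "phi (frac y) = fourier_series (fcoeff phi) y"
proof -
  define g where "g t = phi t - fourier_series (fcoeff phi) t" for t
  have s: "continuous_on {0..1} (fourier_series (fcoeff phi))"
    by (rule continuous_on_fourier_series[OF c])
  have "g (frac y) = 0"
  proof (rule fourier_uniqueness)
    show "continuous_on {0..1} g"
      unfolding g_def by (intro continuous_on_diff phi s)
    show "g 0 = g 1"
      by (simp add: g_def phi01 fourier_series_def)
    show "fcoeff g k = 0" for k
      unfolding g_def fcoeff_diff[OF phi s] fcoeff_fourier_series[OF c] by simp
    show "frac y \<in> {0..1}"
      by (simp add: frac_lt_1 less_imp_le)
  qed
  then show ?thesis
    by (simp add: g_def fourier_series_frac)
qed

lemma infsum_fcoeff_eq: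
  assumes "continuous_on {0..1} phi" and "phi 0 = phi 1"
    and "(\<lambda>k. norm (fcoeff phi k)) summable_on UNIV"
  shows "(\<Sum>\<^sub>\<infinity>l. fcoeff phi l) = phi 0"
  using frac_eq_fourier_series[OF assms, of 0] by (simp add: fourier_series_def)

lemma mu_add_nu:
  assumes "(\<lambda>k. norm (fcoeff phi k)) summable_on UNIV"
  shows "mu phi N k + nu phi N k = (\<Sum>\<^sub>\<infinity>l. fcoeff phi l)"
proof -
  let ?A = "(\<lambda>b. k - b) ` Bset N"
  have fin: "finite ?A"
    by (simp add: Bset_def)
  have s: "fcoeff phi summable_on UNIV"
    by (rule abs_summable_summable[OF assms])
  have "(\<Sum>\<^sub>\<infinity>l\<in>?A \<union> (UNIV - ?A). fcoeff phi l)
        = (\<Sum>\<^sub>\<infinity>l\<in>?A. fcoeff phi l) + (\<Sum>\<^sub>\<infinity>l\<in>UNIV - ?A. fcoeff phi l)"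
    by (intro infsum_Un_disjoint summable_on_subset_banach[OF s]) auto
  then show ?thesis
    using fin by (simp add: mu_def nu_def)
qed

lemma nu_eq_1_minus_mu:
  assumes "continuous_on {0..1} phi" and "phi 0 = 1" and "phi 1 = 1"
    and "(\<lambda>k. norm (fcoeff phi k)) summable_on UNIV"
  shows "nu phi N k = 1 - mu phi N k"
proof -
  have "mu phi N k + nu phi N k = 1"
    using mu_add_nu[OF assms(4)] infsum_fcoeff_eq[OF assms(1) _ assms(4)] assms(2,3) by simp
  then show ?thesis
    by (simp add: eq_diff_eq add.commute)
qed

lemma mu_altdef: "mu phi N k = (\<Sum>b\<in>Bset N. fcoeff phi (k - b))"
  unfolding mu_def by (subst sum.reindex) (auto simp: inj_on_def)

lemma sN_altdef: "sN N x = (\<Sum>b\<in>Bset N. cis2pi b x) / (2 * of_nat N)"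
  unfolding sN_def cis2pi_def by simp

lemma abs_summable_shift:
  fixes c :: "int \<Rightarrow> 'a::real_normed_vector"
  assumes "(\<lambda>l. norm (c l)) summable_on UNIV"
  shows "(\<lambda>l. norm (c (l - b))) summable_on UNIV"
  using summable_on_reindex_bij_witness[of UNIV "\<lambda>l. l + b" "\<lambda>l. l - b" UNIV
      "\<lambda>l. norm (c l)" "\<lambda>l. norm (c (l - b))"] assms
  by auto

lemma kernel_eq_fourier_series:
  assumes "continuous_on {0..1} phi" and "phi 0 = phi 1"
    and "(\<lambda>k. norm (fcoeff phi k)) summable_on UNIV"
  shows "sN N (frac y) * phi (frac y)
           = 1 / (2 * of_nat N) * (\<Sum>b\<in>Bset N. fourier_series (\<lambda>l. fcoeff phi (l - b)) y)"
  by (simp add: sN_altdef frac_eq_fourier_series[OF assms] sum_distrib_right cis2pi_frac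
      cis2pi_mult_fourier_series)

lemma continuous_on_kernel:
  assumes "continuous_on {0..1} phi" and "phi 0 = phi 1"
    and c: "(\<lambda>k. norm (fcoeff phi k)) summable_on UNIV"
  shows "continuous_on S (\<lambda>y. sN N (frac y) * phi (frac y))"
  unfolding kernel_eq_fourier_series[OF assms]
  by (intro continuous_intros continuous_on_fourier_series abs_summable_shift c)

lemma fcoeff_kernel_translate:
  assumes "continuous_on {0..1} phi" and "phi 0 = phi 1"
    and c: "(\<lambda>k. norm (fcoeff phi k)) summable_on UNIV"
  shows "fcoeff (\<lambda>x. sN N (frac (x - a)) * phi (frac (x - a))) k
           = mu phi N k / (2 * of_nat N) * cis2pi (-k) a"
proof -
  let ?F = "\<lambda>b x. fourier_series (\<lambda>l. fcoeff phi (l - b)) (x - a)"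
  have cont: "continuous_on {0..1} (?F b)" for b
    by (intro continuous_on_compose2[OF continuous_on_fourier_series] abs_summable_shift c
        continuous_intros) auto
  have "fcoeff (\<lambda>x. sN N (frac (x - a)) * phi (frac (x - a))) k
        = 1 / (2 * of_nat N) * fcoeff (\<lambda>x. \<Sum>b\<in>Bset N. ?F b x) k"
    by (simp only: kernel_eq_fourier_series[OF assms] fcoeff_cmult)
  also have "\<dots> = 1 / (2 * of_nat N) * (\<Sum>b\<in>Bset N. fcoeff phi (k - b) * cis2pi (-k) a)"
    by (simp add: fcoeff_sum Bset_def cont fcoeff_fourier_series_translate abs_summable_shift c)
  also have "\<dots> = mu phi N k / (2 * of_nat N) * cis2pi (-k) a"
    by (simp add: mu_altdef sum_distrib_right)
  finally show ?thesis .
qed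

lemma sum_cis2pi_samples:
  assumes N: "N > 0"
  shows "(\<Sum>j<2*N. cis2pi m (real j / (2 * real N)))
           = (if int (2*N) dvd m then of_nat (2*N) else 0)"
proof -
  define z where "z = cis2pi m (1 / (2 * real N))"
  have zj: "cis2pi m (real j / (2 * real N)) = z ^ j" for j
    unfolding z_def cis2pi_def by (simp add: exp_of_nat_mult[symmetric] algebra_simps)
  have "z ^ (2*N) = 1"
    using N by (simp flip: zj)
  moreover have "z = 1 \<longleftrightarrow> int (2*N) dvd m"
  proof -
    have "z = 1 \<longleftrightarrow> (\<exists>n::int. 2 * pi * real_of_int m / (2 * real N) = of_int (2 * n) * pi)"
      unfolding z_def cis2pi_def exp_eq_1 by simp
    also have "\<dots> \<longleftrightarrow> (\<exists>n::int. real_of_int m = real_of_int (int (2*N) * n))"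
      using N by (simp add: field_simps)
    also have "\<dots> \<longleftrightarrow> int (2*N) dvd m"
      by (auto simp: dvd_def simp del: of_int_mult)
    finally show ?thesis .
  qed
  ultimately show ?thesis
    unfolding zj sum_gp_strict by auto
qed

definition aliases :: "nat \<Rightarrow> nat \<Rightarrow> int \<Rightarrow> int set" where
  "aliases mm N k = {p \<in> Bset mm. int (2 * N) dvd p - k}"

lemma sample_dft:
  assumes bl: "bandlimited mm f" and N: "N > 0"
  shows "(\<Sum>j<2*N. f (real j / (2 * real N)) $ i * cis2pi (-k) (real j / (2 * real N)))
           = of_nat (2 * N) * (\<Sum>p\<in>aliases mm N k. fcoeff (\<lambda>x. f x $ i) p)"
proof -
  let ?x = "\<lambda>j::nat. real j / (2 * real N)"
  let ?f = "fcoeff (\<lambda>x. f x $ i)"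
  have "?x j \<in> {0..1}" if "j < 2 * N" for j
    using that by (auto simp: field_simps)
  then have "(\<Sum>j<2*N. f (?x j) $ i * cis2pi (-k) (?x j))
      = (\<Sum>j<2*N. \<Sum>p\<in>Bset mm. ?f p * cis2pi (p - k) (?x j))"
    by (intro sum.cong refl)
      (simp add: bandlimited_fourier_expansion[OF bl] sum_distrib_right mult.assoc
        flip: cis2pi_add_freq)
  also have "\<dots> = (\<Sum>p\<in>Bset mm. ?f p * (\<Sum>j<2*N. cis2pi (p - k) (?x j)))"
    by (simp add: sum.swap[of _ "{..<2*N}"] sum_distrib_left)
  also have "\<dots> = (\<Sum>p\<in>Bset mm. if int (2 * N) dvd p - k then of_nat (2 * N) * ?f p else 0)"
    unfolding sum_cis2pi_samples[OF N] by (intro sum.cong refl) simp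
  also have "\<dots> = (\<Sum>p\<in>aliases mm N k. of_nat (2 * N) * ?f p)"
    unfolding aliases_def by (rule sum.inter_filter[symmetric]) (simp add: Bset_def)
  also have "\<dots> = of_nat (2 * N) * (\<Sum>p\<in>aliases mm N k. ?f p)"
    by (simp add: sum_distrib_left)
  finally show ?thesis .
qed

lemma fcoeff_vec_Rphi:
  assumes phi: "continuous_on {0..1} phi" and phi01: "phi 0 = phi 1"
    and c: "(\<lambda>k. norm (fcoeff phi k)) summable_on UNIV" and bl: "bandlimited mm f"
  shows "fcoeff_vec (Rphi phi N f) k = mu phi N k *s (\<Sum>p\<in>aliases mm N k. fcoeff_vec f p)"
proof (cases "N = 0")
  case True
  then show ?thesis
    by (simp add: Rphi_def mu_def Bset_def fcoeff_vec_def fcoeff_def vec_eq_iff)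
next
  case False
  let ?x = "\<lambda>j::nat. real j / (2 * real N)"
  let ?K = "\<lambda>y. sN N (frac y) * phi (frac y)"
  have K: "continuous_on {0..1} (\<lambda>x. ?K (x - a))" for a
    by (intro continuous_on_compose2[OF continuous_on_kernel[OF phi phi01 c]] continuous_intros)
      auto
  have "fcoeff (\<lambda>x. Rphi phi N f x $ i) k
          = fcoeff (\<lambda>x. \<Sum>j<2*N. f (?x j) $ i * ?K (x - ?x j)) k" for i
    by (simp add: Rphi_def sum_component mult.commute)
  also have "\<dots> i = (\<Sum>j<2*N. f (?x j) $ i * (mu phi N k / (2 * of_nat N) * cis2pi (-k) (?x j)))"
    for i
    by (simp add: fcoeff_sum fcoeff_cmult K continuous_intros
        fcoeff_kernel_translate[OF phi phi01 c])
  also have "\<dots> i = mu phi N k / (2 * of_nat N)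
                        * (\<Sum>j<2*N. f (?x j) $ i * cis2pi (-k) (?x j))" for i
    by (simp add: sum_distrib_left ac_simps)
  also have "\<dots> i = mu phi N k * (\<Sum>p\<in>aliases mm N k. fcoeff (\<lambda>x. f x $ i) p)" for i
    using False by (simp add: sample_dft[OF bl])
  finally show ?thesis
    by (simp add: vec_eq_iff sum_component)
qed

lemma aliases_eq_singleton:
  assumes "mm \<le> N" and p: "p \<in> Bset mm" "int (2 * N) dvd p - k"
  shows "aliases mm N k = {p}"
proof -
  have "q = p" if q: "q \<in> Bset mm" "int (2 * N) dvd q - k" for q
  proof (rule ccontr)
    assume "q \<noteq> p"
    then have "q - p \<noteq> 0" by simp
    moreover have "int (2 * N) dvd q - p"
      using dvd_diff[OF q(2) p(2)] by simp
    ultimately have "int (2 * N) \<le> \<bar>q - p\<bar>"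
      using dvd_imp_le_int[of "q - p" "int (2 * N)"] by simp
    moreover have "\<bar>q - p\<bar> < int (2 * N)"
      using p(1) q(1) \<open>mm \<le> N\<close> unfolding Bset_def by auto
    ultimately show False by simp
  qed
  with p show ?thesis
    unfolding aliases_def by blast
qed

lemma aliases_eq_empty:
  assumes "\<And>l. k - 2 * l * int N \<notin> Bset mm"
  shows "aliases mm N k = {}"
proof -
  have "p \<notin> aliases mm N k" for p
  proof
    assume "p \<in> aliases mm N k"
    then obtain q where "p \<in> Bset mm" and "p - k = int (2 * N) * q"
      unfolding aliases_def dvd_def by blast
    then have "k - 2 * (- q) * int N \<in> Bset mm"
      by (simp add: algebra_simps)
    with assms show False by blast
  qed
  then show ?thesis by blast
qed

lemma shifted_band_disjoint:
  assumes "mm \<le> N" and "l \<noteq> 0" and "k - 2 * l * int N \<in> Bset mm"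
  shows "k \<notin> Bset mm"
proof
  assume "k \<in> Bset mm"
  have "(k - 2 * l * int N) - k = int (2 * N) * (- l)"
    by simp
  then have "aliases mm N k = {k - 2 * l * int N}"
    by (intro aliases_eq_singleton[OF assms(1,3)] dvdI)
  moreover have "aliases mm N k = {k}"
    using \<open>k \<in> Bset mm\<close> by (rule aliases_eq_singleton[OF assms(1)]) simp
  moreover have "N > 0"
    using assms by (auto simp: Bset_def)
  ultimately show False
    using assms(2) by simp
qed

theorem lemma4p1:
  fixes phi :: "real \<Rightarrow> complex" and f :: "real \<Rightarrow> complex ^ 'm"
    and mm N :: nat
  assumes "continuous_on {0..1} phi" and "phi 0 = 1" and "phi 1 = 1"
    and "(\<lambda>k. norm (fcoeff phi k)) summable_on UNIV"
    and "N \<ge> mm"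
    and "bandlimited mm f"
  shows "\<forall>k::int.
     (k \<in> Bset mm \<longrightarrow>
        fcoeff_vec f k - fcoeff_vec (Rphi phi N f) k = nu phi N k *s fcoeff_vec f k)
   \<and> (\<forall>l::int. l \<noteq> 0 \<and> k - 2 * l * int N \<in> Bset mm \<longrightarrow>
        fcoeff_vec f k - fcoeff_vec (Rphi phi N f) k = - (mu phi N k *s fcoeff_vec f (k - 2 * l * int N)))
   \<and> (k \<notin> Bset mm \<and> \<not> (\<exists>l::int. l \<noteq> 0 \<and> k - 2 * l * int N \<in> Bset mm) \<longrightarrow>
        fcoeff_vec f k - fcoeff_vec (Rphi phi N f) k = 0)"
proof (intro allI conjI impI)
  fix k :: int
  have R: "fcoeff_vec (Rphi phi N f) k = mu phi N k *s (\<Sum>p\<in>aliases mm N k. fcoeff_vec f p)"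
    using fcoeff_vec_Rphi[OF assms(1) _ assms(4,6)] assms(2,3) by simp
  have f0: "fcoeff_vec f k = 0" if "k \<notin> Bset mm"
    using assms(6) that by (simp add: bandlimited_def)
  show "fcoeff_vec f k - fcoeff_vec (Rphi phi N f) k = nu phi N k *s fcoeff_vec f k"
    if "k \<in> Bset mm"
    using aliases_eq_singleton[OF assms(5) that] nu_eq_1_minus_mu[OF assms(1-4)]
    by (simp add: R vector_sub_rdistrib)
  show "fcoeff_vec f k - fcoeff_vec (Rphi phi N f) k
          = - (mu phi N k *s fcoeff_vec f (k - 2 * l * int N))"
    if l: "l \<noteq> 0 \<and> k - 2 * l * int N \<in> Bset mm" for l
  proof -
    have "aliases mm N k = {k - 2 * l * int N}"
      using l by (intro aliases_eq_singleton assms(5)) auto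
    moreover have "fcoeff_vec f k = 0"
      using l by (intro f0 shifted_band_disjoint[OF assms(5)]) auto
    ultimately show ?thesis
      by (simp add: R)
  qed
  show "fcoeff_vec f k - fcoeff_vec (Rphi phi N f) k = 0"
    if "k \<notin> Bset mm \<and> \<not> (\<exists>l. l \<noteq> 0 \<and> k - 2 * l * int N \<in> Bset mm)"
  proof -
    have "aliases mm N k = {}"
      using that by (intro aliases_eq_empty) (metis mult_eq_0_iff diff_0_right)
    with that show ?thesis
      by (simp add: R f0)
  qed
qed

end
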